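(* Let $0,1,\dots,9$ be points of $\mathbb{P}^3(\mathbb{C})$ with fixed representative vectors. Assume that (i) the vector space of quadratic forms vanishing at the six points $0,\dots,5$ has dimension $4$, and (ii) $[0125][0234][1345]-[0124][2345][0135]\neq 0$. Let $M$ be the $4\times 4$ matrix whose row indexed by $j\in\{6,7,8,9\}$ is $$\big([015j][234j],\ [012j][345j],\ [024j][135j],\ [045j][123j]\big).$$ Then the ten points lie on a common quadric surface (the zero set of a nonzero quadratic form) if and only if $\det M=0$.
   Context: $[abcd]$ denotes the determinant of the $4\times4$ matrix whose columns are the chosen representative vectors of the points $a,b,c,d$. A quadric surface is the zero locus in $\mathbb{P}^3$ of a nonzero homogeneous polynomial of degree $2$ in four variables. *)

theory Defs
  imports "HOL-Analysis.Analysis"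
begin

text \<open>A quadratic form in four variables x_1..x_4 is represented by its coefficient function
  q :: complex^4^4, where q$i$j (for i <= j) is the coefficient of the monomial x_i x_j;
  coefficients with i > j are required to be zero (they are not part of the form).\<close>

definition bracket :: "complex^4 \<Rightarrow> complex^4 \<Rightarrow> complex^4 \<Rightarrow> complex^4 \<Rightarrow> complex" where
  "bracket a b c d = det (transpose (vector [a, b, c, d] :: complex^4^4))"

definition is_qcoeff :: "(complex^4^4) \<Rightarrow> bool" where
  "is_qcoeff q \<longleftrightarrow> (\<forall>i j. \<not> i \<le> j \<longrightarrow> q$i$j = 0)"

definition qeval :: "(complex^4^4) \<Rightarrow> complex^4 \<Rightarrow> complex" where
  "qeval q v = (\<Sum>i\<in>UNIV. \<Sum>j\<in>UNIV. if i \<le> j then q$i$j * v$i * v$j else 0)"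

definition qscale :: "complex \<Rightarrow> (complex^4^4) \<Rightarrow> (complex^4^4)" where
  "qscale c q = (\<chi> i j. c * q$i$j)"

definition quads_through :: "(complex^4) set \<Rightarrow> (complex^4^4) set" where
  "quads_through P = {q. is_qcoeff q \<and> (\<forall>v\<in>P. qeval q v = 0)}"

definition on_common_quadric :: "(complex^4) set \<Rightarrow> bool" where
  "on_common_quadric P \<longleftrightarrow> (\<exists>q\<in>quads_through P. \<exists>i j. i \<le> j \<and> q$i$j \<noteq> 0)"

definition mrow :: "(nat \<Rightarrow> complex^4) \<Rightarrow> nat \<Rightarrow> complex^4" where
  "mrow p j = vector [bracket (p 0) (p 1) (p 5) (p j) * bracket (p 2) (p 3) (p 4) (p j),
                      bracket (p 0) (p 1) (p 2) (p j) * bracket (p 3) (p 4) (p 5) (p j),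
                      bracket (p 0) (p 2) (p 4) (p j) * bracket (p 1) (p 3) (p 5) (p j),
                      bracket (p 0) (p 4) (p 5) (p j) * bracket (p 1) (p 2) (p 3) (p j)]"

definition matM :: "(nat \<Rightarrow> complex^4) \<Rightarrow> complex^4^4" where
  "matM p = vector [mrow p 6, mrow p 7, mrow p 8, mrow p 9]"

end

theory Submission
  imports Defs
begin

text \<open>The four plane pairs [015x][234x], [012x][345x], [024x][135x] and [045x][123x] are
  quadrics through the points 0,...,5. Evaluating a vanishing linear combination of them at the
  sums p a + p b of two of these points, and reducing modulo the Grassmann-Pluecker relations,
  shows that condition (ii) makes them linearly independent, so by (i) they form a basis of the
  quadrics through 0,...,5. A quadric through all ten points is therefore a combination with a
  nonzero coefficient vector c, and vanishing at the points 6,...,9 says exactly M c = 0.\<close>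

lemma vector_4 [simp]:
  "(vector [x, y, z, w] :: 'a::zero^4) $ 1 = x"
  "(vector [x, y, z, w] :: 'a::zero^4) $ 2 = y"
  "(vector [x, y, z, w] :: 'a::zero^4) $ 3 = z"
  "(vector [x, y, z, w] :: 'a::zero^4) $ 4 = w"
  unfolding vector_def by simp_all

lemma det_4_expand:
  "det (A::'a::comm_ring_1^4^4) =
 A$1$1*A$2$2*A$3$3*A$4$4 - A$1$1*A$2$2*A$3$4*A$4$3 - A$1$1*A$2$3*A$3$2*A$4$4 + A$1$1*A$2$3*A$3$4*A$4$2 + A$1$1*A$2$4*A$3$2*A$4$3 - A$1$1*A$2$4*A$3$3*A$4$2
 - A$1$2*A$2$1*A$3$3*A$4$4 + A$1$2*A$2$1*A$3$4*A$4$3 + A$1$2*A$2$3*A$3$1*A$4$4 - A$1$2*A$2$3*A$3$4*A$4$1 - A$1$2*A$2$4*A$3$1*A$4$3 + A$1$2*A$2$4*A$3$3*A$4$1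
 + A$1$3*A$2$1*A$3$2*A$4$4 - A$1$3*A$2$1*A$3$4*A$4$2 - A$1$3*A$2$2*A$3$1*A$4$4 + A$1$3*A$2$2*A$3$4*A$4$1 + A$1$3*A$2$4*A$3$1*A$4$2 - A$1$3*A$2$4*A$3$2*A$4$1
 - A$1$4*A$2$1*A$3$2*A$4$3 + A$1$4*A$2$1*A$3$3*A$4$2 + A$1$4*A$2$2*A$3$1*A$4$3 - A$1$4*A$2$2*A$3$3*A$4$1 - A$1$4*A$2$3*A$3$1*A$4$2 + A$1$4*A$2$3*A$3$2*A$4$1"
proof -
  have f1: "finite {2::4, 3, 4}" "1 \<notin> {2::4, 3, 4}" by auto
  have f2: "finite {3::4, 4}" "2 \<notin> {3::4, 4}" by auto
  have f3: "finite {4::4}" "3 \<notin> {4::4}" by auto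
  show ?thesis
    unfolding det_def UNIV_4
    unfolding sum_over_permutations_insert[OF f1]
    unfolding sum_over_permutations_insert[OF f2]
    unfolding sum_over_permutations_insert[OF f3]
    unfolding permutes_sing
    by (simp add: sign_swap_id permutation_swap_id sign_compose permutation_compose sign_id swap_id_eq algebra_simps)
qed

lemma bracket_expand: "bracket a b c d =
 a$1*b$2*c$3*d$4 - a$1*b$2*c$4*d$3 - a$1*b$3*c$2*d$4 + a$1*b$3*c$4*d$2 + a$1*b$4*c$2*d$3 - a$1*b$4*c$3*d$2
 - a$2*b$1*c$3*d$4 + a$2*b$1*c$4*d$3 + a$2*b$3*c$1*d$4 - a$2*b$3*c$4*d$1 - a$2*b$4*c$1*d$3 + a$2*b$4*c$3*d$1
 + a$3*b$1*c$2*d$4 - a$3*b$1*c$4*d$2 - a$3*b$2*c$1*d$4 + a$3*b$2*c$4*d$1 + a$3*b$4*c$1*d$2 - a$3*b$4*c$2*d$1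
 - a$4*b$1*c$2*d$3 + a$4*b$1*c$3*d$2 + a$4*b$2*c$1*d$3 - a$4*b$2*c$3*d$1 - a$4*b$3*c$1*d$2 + a$4*b$3*c$2*d$1"
  unfolding bracket_def det_transpose by (subst det_4_expand) simp

lemma bracket_add [simp]: "bracket a b c (x + y) = bracket a b c x + bracket a b c y"
  unfolding bracket_expand by (simp add: algebra_simps)

lemma bracket_repeated [simp]:
  "bracket a a c d = 0" "bracket a b a d = 0" "bracket a b c a = 0"
  "bracket a b b d = 0" "bracket a b c b = 0" "bracket a b c c = 0"
  unfolding bracket_expand by (simp_all add: algebra_simps)

lemma bracket_swap_12: "bracket b a c d = - bracket a b c d"
  unfolding bracket_expand by (simp add: algebra_simps)

lemma bracket_swap_23: "bracket a c b d = - bracket a b c d"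
  unfolding bracket_expand by (simp add: algebra_simps)

lemma bracket_swap_34: "bracket a b d c = - bracket a b c d"
  unfolding bracket_expand by (simp add: algebra_simps)

lemma grassmann_pluecker:
  "bracket e f a b * bracket e f c d - bracket e f a c * bracket e f b d
     + bracket e f a d * bracket e f b c = 0"
  unfolding bracket_expand by algebra

lemma det_eq_0_iff_nontrivial_kernel:
  "det (A :: 'a::field^'n^'n) = 0 \<longleftrightarrow> (\<exists>x. x \<noteq> 0 \<and> A *v x = 0)"
  using invertible_det_nz[of A] invertible_left_inverse[of A] matrix_left_invertible_ker[of A]
  by blast

text \<open>The hypothesis \<open>card B > 0\<close> excludes infinite \<open>B\<close>, whose cardinality is the junk value 0.\<close>

lemma (in vector_space) subset_span_if_independent_card_eq_dim:
  assumes "B \<subseteq> V" and "independent B" and "card B = dim V" and "card B > 0"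
  shows "V \<subseteq> span B"
proof
  fix a assume "a \<in> V"
  show "a \<in> span B"
  proof (rule ccontr)
    assume "a \<notin> span B"
    then have "independent (insert a B)" and "a \<notin> B"
      using assms(2) independent_insertI span_base by blast+
    obtain C where C: "V \<subseteq> span C" "card C = dim V"
      by (rule basis_exists)
    have "finite B" "finite C"
      using C(2) assms(3,4) by (auto intro: card_ge_0_finite)
    moreover have "insert a B \<subseteq> span C"
      using C(1) assms(1) \<open>a \<in> V\<close> by auto
    ultimately have "card (insert a B) \<le> card C"
      using independent_span_bound \<open>independent (insert a B)\<close> by simp
    then show False
      using \<open>a \<notin> B\<close> \<open>finite B\<close> C(2) assms(3) by simp
  qed
qed

lemma (in vector_space) subset_combinations_if_injective:
  fixes f :: "'i::finite \<Rightarrow> 'b"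
  assumes comb_inj: "\<And>c :: 'a^'i. (\<Sum>i\<in>UNIV. c$i *s f i) = 0 \<Longrightarrow> c = 0"
    and subset: "range f \<subseteq> V" and dim_eq: "dim V = CARD('i)"
  shows "V \<subseteq> range (\<lambda>c :: 'a^'i. \<Sum>i\<in>UNIV. c$i *s f i)"
proof -
  have "inj f"
  proof (rule injI, rule ccontr)
    fix i j assume eq: "f i = f j" and "i \<noteq> j"
    define c :: "'a^'i" where "c = (\<chi> k. if k = i then 1 else if k = j then -1 else 0)"
    have "(\<Sum>k\<in>UNIV. c$k *s f k) = f i - f j"
      using \<open>i \<noteq> j\<close> by (simp add: c_def if_distrib[of "\<lambda>a. scale a (f _)"] sum.If_cases Diff_eq)
    then have "c = 0" using eq by (intro comb_inj) simp
    then have "c $ i = 0" by simp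
    then show False by (simp add: c_def)
  qed
  then have sum_range: "(\<Sum>v\<in>range f. u v *s v) = (\<Sum>i\<in>UNIV. u (f i) *s f i)" for u
    by (simp add: sum.reindex)
  have "independent (range f)"
  proof (rule independent_if_scalars_zero)
    fix u x assume "(\<Sum>v\<in>range f. u v *s v) = 0" and "x \<in> range f"
    then show "u x = 0"
      using comb_inj[of "\<chi> i. u (f i)"] by (auto simp: sum_range vec_eq_iff)
  qed simp
  moreover have "card (range f) = CARD('i)"
    using \<open>inj f\<close> by (simp add: card_image)
  ultimately have "V \<subseteq> span (range f)"
    using subset_span_if_independent_card_eq_dim subset dim_eq by simp
  also have "\<dots> \<subseteq> range (\<lambda>c :: 'a^'i. \<Sum>i\<in>UNIV. c$i *s f i)"
  proof
    fix x assume "x \<in> span (range f)"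
    then obtain u where "x = (\<Sum>i\<in>UNIV. u (f i) *s f i)"
      by (auto simp: span_finite sum_range)
    then show "x \<in> range (\<lambda>c :: 'a^'i. \<Sum>i\<in>UNIV. c$i *s f i)"
      by (intro image_eqI[where x = "\<chi> i. u (f i)"]) simp_all
  qed
  finally show ?thesis .
qed

definition plane_form :: "complex^4 \<Rightarrow> complex^4 \<Rightarrow> complex^4 \<Rightarrow> complex^4" where
  "plane_form a b c = (\<chi> k. bracket a b c (axis k 1))"

lemma bracket_eq_plane_form: "bracket a b c v = (\<Sum>k\<in>UNIV. plane_form a b c $ k * v $ k)"
  unfolding plane_form_def sum_4 by (simp add: bracket_expand axis_def algebra_simps)

definition quad_prod :: "complex^4 \<Rightarrow> complex^4 \<Rightarrow> complex^4^4" where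
  "quad_prod l m =
    (\<chi> i j. if i < j then l$i * m$j + l$j * m$i else if i = j then l$i * m$i else 0)"

lemma is_qcoeff_quad_prod: "is_qcoeff (quad_prod l m)"
  by (auto simp add: is_qcoeff_def quad_prod_def)

lemma qeval_quad_prod:
  "qeval (quad_prod l m) v = (\<Sum>k\<in>UNIV. l$k * v$k) * (\<Sum>k\<in>UNIV. m$k * v$k)"
  unfolding qeval_def quad_prod_def sum_4
  by (simp add: less_eq_bit0_def less_bit0_def bit0.Rep_numeral bit0.Rep_1 algebra_simps)

definition plane_pair ::
    "complex^4 \<Rightarrow> complex^4 \<Rightarrow> complex^4 \<Rightarrow> complex^4 \<Rightarrow> complex^4 \<Rightarrow> complex^4 \<Rightarrow> complex^4^4" where
  "plane_pair a b c d e f = quad_prod (plane_form a b c) (plane_form d e f)"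

lemma is_qcoeff_plane_pair: "is_qcoeff (plane_pair a b c d e f)"
  by (simp add: plane_pair_def is_qcoeff_quad_prod)

lemma qeval_plane_pair: "qeval (plane_pair a b c d e f) v = bracket a b c v * bracket d e f v"
  by (simp add: plane_pair_def qeval_quad_prod bracket_eq_plane_form)

interpretation qform: vector_space qscale
  by unfold_locales (simp_all add: qscale_def vec_eq_iff algebra_simps)

lemma qscale_nth [simp]: "qscale c q $ i $ j = c * q $ i $ j"
  by (simp add: qscale_def)

lemma qeval_of_bool: "qeval q v = (\<Sum>i\<in>UNIV. \<Sum>j\<in>UNIV. of_bool (i \<le> j) * q$i$j * v$i * v$j)"
  unfolding qeval_def by (intro sum.cong) auto

lemma qeval_add: "qeval (q + r) v = qeval q v + qeval r v"
  unfolding qeval_of_bool by (simp add: sum.distrib[symmetric] algebra_simps)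

lemma qeval_qscale: "qeval (qscale c q) v = c * qeval q v"
  unfolding qeval_of_bool qscale_def by (simp add: sum_distrib_left algebra_simps)

lemma qeval_zero: "qeval 0 v = 0"
  by (simp add: qeval_of_bool)

lemma qeval_sum: "qeval (\<Sum>k\<in>K. q k) v = (\<Sum>k\<in>K. qeval (q k) v)"
  by (induction K rule: infinite_finite_induct) (simp_all add: qeval_add qeval_zero)

lemma subspace_quads_through: "qform.subspace (quads_through P)"
  unfolding qform.subspace_def quads_through_def is_qcoeff_def
  by (simp add: qeval_add qeval_qscale qeval_zero)

lemma on_common_quadric_iff: "on_common_quadric P \<longleftrightarrow> (\<exists>q\<in>quads_through P. q \<noteq> 0)"
  unfolding on_common_quadric_def quads_through_def is_qcoeff_def
  by (auto simp: vec_eq_iff) blast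

lemma quads_through_Un:
  "quads_through (P \<union> R) = quads_through P \<inter> {q. \<forall>v\<in>R. qeval q v = 0}"
  unfolding quads_through_def by blast

definition pair_quadrics :: "(nat \<Rightarrow> complex^4) \<Rightarrow> (complex^4^4)^4" where
  "pair_quadrics p = vector
    [plane_pair (p 0) (p 1) (p 5) (p 2) (p 3) (p 4), plane_pair (p 0) (p 1) (p 2) (p 3) (p 4) (p 5),
     plane_pair (p 0) (p 2) (p 4) (p 1) (p 3) (p 5), plane_pair (p 0) (p 4) (p 5) (p 1) (p 2) (p 3)]"

definition pair_quadrics_comb :: "(nat \<Rightarrow> complex^4) \<Rightarrow> complex^4 \<Rightarrow> complex^4^4" where
  "pair_quadrics_comb p c = (\<Sum>k\<in>UNIV. qscale (c $ k) (pair_quadrics p $ k))"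

lemma qeval_pair_quadrics_comb:
  "qeval (pair_quadrics_comb p c) v =
     c$1 * (bracket (p 0) (p 1) (p 5) v * bracket (p 2) (p 3) (p 4) v)
   + c$2 * (bracket (p 0) (p 1) (p 2) v * bracket (p 3) (p 4) (p 5) v)
   + c$3 * (bracket (p 0) (p 2) (p 4) v * bracket (p 1) (p 3) (p 5) v)
   + c$4 * (bracket (p 0) (p 4) (p 5) v * bracket (p 1) (p 2) (p 3) v)"
  unfolding pair_quadrics_comb_def qeval_sum
  by (simp add: pair_quadrics_def qeval_qscale qeval_plane_pair sum_4)

lemma pair_quadrics_through_six: "pair_quadrics p $ k \<in> quads_through (p ` {0..5})"
proof -
  have "qeval (pair_quadrics p $ k) (p i) = 0" if "i \<le> 5" for i
  proof -
    have "i \<in> {0, 1, 2, 3, 4, 5}"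
      using that by auto
    then show ?thesis
      using exhaust_4[of k] by (auto simp: pair_quadrics_def qeval_plane_pair)
  qed
  moreover have "is_qcoeff (pair_quadrics p $ k)"
    using exhaust_4[of k] by (auto simp: pair_quadrics_def is_qcoeff_plane_pair)
  ultimately show ?thesis
    by (auto simp: quads_through_def)
qed

lemma pair_quadrics_comb_through_six: "pair_quadrics_comb p c \<in> quads_through (p ` {0..5})"
  unfolding pair_quadrics_comb_def
  by (intro qform.subspace_sum qform.subspace_scale subspace_quads_through pair_quadrics_through_six)

context
  fixes p :: "nat \<Rightarrow> complex^4"
begin

text \<open>Oriented by the indices, these rules let the simplifier sort every bracket of the points
  \<open>p i\<close> into increasing order.\<close>

lemma bracket_sort:
  "j < i \<Longrightarrow> bracket (p i) (p j) c d = - bracket (p j) (p i) c d"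
  "j < i \<Longrightarrow> bracket a (p i) (p j) d = - bracket a (p j) (p i) d"
  "j < i \<Longrightarrow> bracket a b (p i) (p j) = - bracket a b (p j) (p i)"
  by (simp_all only: bracket_swap_12[of "p j" "p i"] bracket_swap_23[of _ "p j" "p i"]
      bracket_swap_34[of _ _ "p j" "p i"] minus_minus)

lemma pair_quadrics_comb_eq_0_imp:
  assumes gen: "bracket (p 0) (p 1) (p 2) (p 5) * bracket (p 0) (p 2) (p 3) (p 4) * bracket (p 1) (p 3) (p 4) (p 5)
            - bracket (p 0) (p 1) (p 2) (p 4) * bracket (p 2) (p 3) (p 4) (p 5) * bracket (p 0) (p 1) (p 3) (p 5) \<noteq> 0"
    (is "?g \<noteq> 0")
    and comb: "pair_quadrics_comb p c = 0"
  shows "c = 0"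
proof -
  text \<open>A quadric vanishing at \<open>p a\<close> and \<open>p b\<close> takes at \<open>p a + p b\<close> the value of its polar
    form. The fifteen resulting relations are linear in \<open>c\<close>, and together with the
    Grassmann-Pluecker relations among the brackets of the six points they force \<open>?g * c = 0\<close>.\<close>
  have polar: "qeval (pair_quadrics_comb p c) (p a + p b) = 0" for a b
    using comb by (simp add: qeval_zero)
  have "?g * c$1 = 0 \<and> ?g * c$2 = 0 \<and> ?g * c$3 = 0 \<and> ?g * c$4 = 0"
    using polar[of 0 1] polar[of 0 2] polar[of 0 3] polar[of 0 4] polar[of 0 5]
    polar[of 1 2] polar[of 1 3] polar[of 1 4] polar[of 1 5] polar[of 2 3]
    polar[of 2 4] polar[of 2 5] polar[of 3 4] polar[of 3 5] polar[of 4 5]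
    grassmann_pluecker[of "p 0" "p 1" "p 2" "p 3" "p 4" "p 5"]
    grassmann_pluecker[of "p 0" "p 2" "p 1" "p 3" "p 4" "p 5"]
    grassmann_pluecker[of "p 0" "p 3" "p 1" "p 2" "p 4" "p 5"]
    grassmann_pluecker[of "p 0" "p 4" "p 1" "p 2" "p 3" "p 5"]
    grassmann_pluecker[of "p 0" "p 5" "p 1" "p 2" "p 3" "p 4"]
    grassmann_pluecker[of "p 1" "p 2" "p 0" "p 3" "p 4" "p 5"]
    grassmann_pluecker[of "p 1" "p 3" "p 0" "p 2" "p 4" "p 5"]
    grassmann_pluecker[of "p 1" "p 4" "p 0" "p 2" "p 3" "p 5"]
    grassmann_pluecker[of "p 1" "p 5" "p 0" "p 2" "p 3" "p 4"]
    grassmann_pluecker[of "p 2" "p 3" "p 0" "p 1" "p 4" "p 5"]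
    grassmann_pluecker[of "p 2" "p 4" "p 0" "p 1" "p 3" "p 5"]
    grassmann_pluecker[of "p 2" "p 5" "p 0" "p 1" "p 3" "p 4"]
    grassmann_pluecker[of "p 3" "p 4" "p 0" "p 1" "p 2" "p 5"]
    grassmann_pluecker[of "p 3" "p 5" "p 0" "p 1" "p 2" "p 4"]
    grassmann_pluecker[of "p 4" "p 5" "p 0" "p 1" "p 2" "p 3"]
    by (simp (no_asm_use) only: qeval_pair_quadrics_comb bracket_add bracket_repeated bracket_sort
        numeral_less_iff zero_less_numeral zero_less_one one_less_numeral_iff Num.less_num_simps
        mult_minus_left mult_minus_right minus_minus) algebra
  then show ?thesis
    using gen by (simp add: vec_eq_iff forall_4)
qed

end

lemma matM_mult_eq_0_iff:
  "matM p *v c = 0 \<longleftrightarrow> (\<forall>j\<in>{6..9}. qeval (pair_quadrics_comb p c) (p j) = 0)"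
proof -
  have "matM p *v c = vector [qeval (pair_quadrics_comb p c) (p 6), qeval (pair_quadrics_comb p c) (p 7),
      qeval (pair_quadrics_comb p c) (p 8), qeval (pair_quadrics_comb p c) (p 9)]"
    by (simp add: vec_eq_iff forall_4 matrix_vector_mult_def matM_def mrow_def sum_4
        qeval_pair_quadrics_comb algebra_simps)
  moreover have "{6..9} = {6, 7, 8, 9 :: nat}"
    by auto
  ultimately show ?thesis
    by (simp add: vec_eq_iff forall_4)
qed

theorem mainTheorem6:
  fixes p :: "nat \<Rightarrow> complex^4"
  assumes nz: "\<And>k. k \<le> 9 \<Longrightarrow> p k \<noteq> 0"
    and dim4: "vector_space.dim qscale (quads_through (p ` {0..5})) = 4"
    and gen: "bracket (p 0) (p 1) (p 2) (p 5) * bracket (p 0) (p 2) (p 3) (p 4) * bracket (p 1) (p 3) (p 4) (p 5)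
            - bracket (p 0) (p 1) (p 2) (p 4) * bracket (p 2) (p 3) (p 4) (p 5) * bracket (p 0) (p 1) (p 3) (p 5) \<noteq> 0"
  shows "on_common_quadric (p ` {0..9}) \<longleftrightarrow> det (matM p) = 0"
proof -
  let ?Q = "pair_quadrics_comb p"
  have inj: "?Q c = 0 \<Longrightarrow> c = 0" for c
    using gen by (rule pair_quadrics_comb_eq_0_imp)
  have "quads_through (p ` {0..5}) \<subseteq> range ?Q"
    using qform.subset_combinations_if_injective[of "($) (pair_quadrics p)"
        "quads_through (p ` {0..5})"] inj dim4 pair_quadrics_through_six
    by (auto simp: pair_quadrics_comb_def)
  then have six: "quads_through (p ` {0..5}) = range ?Q"
    using pair_quadrics_comb_through_six by auto
  have Q0: "?Q 0 = 0"
    by (simp add: pair_quadrics_comb_def qscale_def vec_eq_iff)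
  have ten: "p ` {0..9} = p ` {0..5} \<union> p ` {6..9}"
    unfolding image_Un[symmetric] by (intro arg_cong[where f = "image p"]) auto
  have "on_common_quadric (p ` {0..9}) \<longleftrightarrow>
      (\<exists>c. c \<noteq> 0 \<and> (\<forall>j\<in>{6..9}. qeval (?Q c) (p j) = 0))"
    unfolding ten on_common_quadric_iff quads_through_Un six using inj Q0 by auto metis
  also have "\<dots> \<longleftrightarrow> det (matM p) = 0"
    by (simp add: det_eq_0_iff_nontrivial_kernel matM_mult_eq_0_iff)
  finally show ?thesis .
qed

end
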